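(* Let $\beta$ be a composition of $N$ with $\ell$ parts, $\mathcal{P}$ a normal subposet of $1<\cdots<\ell$, and $\mathcal{L}$ the total order $1<\cdots<\ell$ (so $\mathrm{UT}_{(\beta,\mathcal{L})}=\mathrm{UT}_\beta$). For $\lambda\in\mathcal{T}^\beta_{\mathcal{P}}$ let $\mathrm{Ext}(\lambda)\in\mathcal{T}^\beta_{\mathcal{L}}$ be $\lambda$ extended by $0$ on pairs $i<j$ with $i\not\prec_{\mathcal{P}}j$. Then, as functions on $\mathrm{UT}_{(\beta,\mathcal{P})}$, $$\frac{\chi^\lambda_\beta}{\chi^\lambda_\beta(1)}=\frac{\mathrm{Res}^{\mathrm{UT}_\beta}_{\mathrm{UT}_{(\beta,\mathcal{P})}}\big(\chi^{\mathrm{Ext}(\lambda)}_\beta\big)}{\chi^{\mathrm{Ext}(\lambda)}_\beta(1)},$$ where on the left $\chi^\lambda_\beta$ is the $P_\beta$-supercharacter of $\mathrm{UT}_{(\beta,\mathcal{P})}$ and on the right $\chi^{\mathrm{Ext}(\lambda)}_\beta$ is the $P_\beta$-supercharacter of $\mathrm{UT}_\beta$.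
   Context: $\mathbb{F}_q$ finite field; $\vartheta:\mathbb{F}_q^+\to\mathbb{C}^\times$ a fixed nontrivial homomorphism. For a subposet $\mathcal{R}$ of $1<\cdots<N$, $\mathfrak{ut}_{\mathcal{R}}=\{x\in M_N(\mathbb{F}_q)\mid x_{ab}\neq0\Rightarrow a\prec_{\mathcal{R}}b\}$, $\mathrm{UT}_{\mathcal{R}}=\mathrm{Id}_N+\mathfrak{ut}_{\mathcal{R}}$. A subposet $\mathcal{P}$ of $\mathcal{R}$ is normal if $j\prec_{\mathcal{P}}k$ implies $i\prec_{\mathcal{P}}k$ and $j\prec_{\mathcal{P}}l$ for all $i\prec_{\mathcal{R}}j$, $k\prec_{\mathcal{R}}l$. For a composition $\beta=(\beta_1,\ldots,\beta_\ell)$ of $N$: $\mathcal{Q}_i=\{\beta_1+\cdots+\beta_{i-1}+1,\ldots,\beta_1+\cdots+\beta_i\}$; $P_\beta$ is the group of invertible block upper triangular matrices (blocks $\mathcal{Q}_i$); $\mathrm{fat}_\beta(\mathcal{P})$ is the poset with $a\prec b$ iff $a\in\mathcal{Q}_i,b\in\mathcal{Q}_j$, $i\prec_{\mathcal{P}}j$; $\mathfrak{ut}_{(\beta,\mathcal{P})}=\mathfrak{ut}_{\mathrm{fat}_\beta(\mathcal{P})}$, $\mathrm{UT}_{(\beta,\mathcal{P})}=\mathrm{UT}_{\mathrm{fat}_\beta(\mathcal{P})}$. $P_\beta$ acts on the dual by $(a\cdot y\cdot b)(x)=y(a^{-1}xb^{-1})$ and $\chi^y_\beta(u)=\sum_{z\in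 P_\beta yP_\beta}\vartheta(z(u-\mathrm{Id}_N))$. $\mathcal{T}^\beta_{\mathcal{P}}$ is the set of $\lambda:\{(i,j)\mid i\prec_{\mathcal{P}}j\}\to\mathbb{Z}_{\ge0}$ with all row sums $\sum_k\lambda_{jk}\le\beta_j$ and column sums $\sum_i\lambda_{ij}\le\beta_j$. A rook placement on $\mathrm{fat}_\beta(\mathcal{P})$ is a $0/1$ function $\tilde\lambda$ on $\{(a,b)\mid a\prec b\}$ using each $a$ at most once as a first coordinate and each $b$ at most once as a second coordinate; $e^*_{\tilde\lambda}=\sum\tilde\lambda_{ab}E^*_{ab}$ with $E^*_{ab}(x)=x_{ab}$; its block count is $(i,j)\mapsto\sum_{a\in\mathcal{Q}_i,b\in\mathcal{Q}_j}\tilde\lambda_{ab}$. The two-sided $P_\beta$-orbit of $e^*_{\tilde\lambda}$ depends only on the block count of $\tilde\lambda$, and for $\lambda\in\mathcal{T}^\beta_{\mathcal{P}}$ we write $\chi^\lambda_\beta=\chi^y_\beta$ with $y=e^*_{\tilde\lambda}$ for any rook placement $\tilde\lambda$ with block count $\lambda$. *)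

theory Defs
  imports Complex_Main
begin

text \<open>Matrices of size N over a field are functions nat => nat => 'a, indexed by
  {1..N}, and zero outside {1..N} x {1..N}.\<close>

type_synonym 'a mat = "nat \<Rightarrow> nat \<Rightarrow> 'a"

definition matsN :: "nat \<Rightarrow> ('a::zero) mat set" where
  "matsN n = {x. \<forall>a b. \<not> (a \<in> {1..n} \<and> b \<in> {1..n}) \<longrightarrow> x a b = 0}"

definition mmult :: "nat \<Rightarrow> ('a::comm_semiring_1) mat \<Rightarrow> 'a mat \<Rightarrow> 'a mat" where
  "mmult n x y = (\<lambda>a b. \<Sum>c\<in>{1..n}. x a c * y c b)"

definition idm :: "nat \<Rightarrow> ('a::{zero,one}) mat" where
  "idm n = (\<lambda>a b. if a = b \<and> a \<in> {1..n} then 1 else 0)"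

definition madd :: "('a::plus) mat \<Rightarrow> 'a mat \<Rightarrow> 'a mat" where
  "madd x y = (\<lambda>a b. x a b + y a b)"

definition msub :: "('a::minus) mat \<Rightarrow> 'a mat \<Rightarrow> 'a mat" where
  "msub x y = (\<lambda>a b. x a b - y a b)"

definition minv :: "nat \<Rightarrow> ('a::comm_semiring_1) mat \<Rightarrow> 'a mat" where
  "minv n g = (THE h. h \<in> matsN n \<and> mmult n g h = idm n \<and> mmult n h g = idm n)"

definition Lord :: "nat \<Rightarrow> (nat \<times> nat) set" where
  "Lord n = {(a, b). 1 \<le> a \<and> a < b \<and> b \<le> n}"

definition subposet :: "nat \<Rightarrow> (nat \<times> nat) set \<Rightarrow> bool" where
  "subposet n P \<longleftrightarrow> P \<subseteq> Lord n \<and> trans P"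

definition normal_sub :: "(nat \<times> nat) set \<Rightarrow> (nat \<times> nat) set \<Rightarrow> bool" where
  "normal_sub R P \<longleftrightarrow> P \<subseteq> R \<and>
     (\<forall>j k. (j, k) \<in> P \<longrightarrow> (\<forall>i. (i, j) \<in> R \<longrightarrow> (i, k) \<in> P) \<and> (\<forall>l. (k, l) \<in> R \<longrightarrow> (j, l) \<in> P))"

definition utR :: "nat \<Rightarrow> (nat \<times> nat) set \<Rightarrow> ('a::zero) mat set" where
  "utR n R = {x \<in> matsN n. \<forall>a b. x a b \<noteq> 0 \<longrightarrow> (a, b) \<in> R}"

definition UTR :: "nat \<Rightarrow> (nat \<times> nat) set \<Rightarrow> ('a::{zero,one,plus}) mat set" where
  "UTR n R = (\<lambda>x. madd (idm n) x) ` utR n R"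

text \<open>Compositions as lists of positive integers; blocks Q_i for i = 1..length beta.\<close>

definition blockQ :: "nat list \<Rightarrow> nat \<Rightarrow> nat set" where
  "blockQ \<beta> i = {sum_list (take (i - 1) \<beta>) + 1 .. sum_list (take i \<beta>)}"

definition fat :: "nat list \<Rightarrow> (nat \<times> nat) set \<Rightarrow> (nat \<times> nat) set" where
  "fat \<beta> P = {(a, b). \<exists>i j. (i, j) \<in> P \<and> a \<in> blockQ \<beta> i \<and> b \<in> blockQ \<beta> j}"

definition Pbeta :: "nat list \<Rightarrow> ('a::field) mat set" where
  "Pbeta \<beta> = {g \<in> matsN (sum_list \<beta>).
      (\<forall>a b. g a b \<noteq> 0 \<longrightarrow> (\<exists>i j. i \<le> j \<and> a \<in> blockQ \<beta> i \<and> b \<in> blockQ \<beta> j)) \<and>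
      (\<exists>h \<in> matsN (sum_list \<beta>). mmult (sum_list \<beta>) g h = idm (sum_list \<beta>) \<and>
                                  mmult (sum_list \<beta>) h g = idm (sum_list \<beta>))}"

text \<open>Linear functionals on ut_(beta,P) are represented as functions on matrices
  that vanish outside ut_(beta,P).\<close>

definition funrest :: "'b set \<Rightarrow> ('b \<Rightarrow> 'a::zero) \<Rightarrow> 'b \<Rightarrow> 'a" where
  "funrest U f = (\<lambda>x. if x \<in> U then f x else 0)"

definition act :: "nat list \<Rightarrow> (nat \<times> nat) set \<Rightarrow> ('a::field) mat \<Rightarrow> ('a mat \<Rightarrow> 'a) \<Rightarrow> 'a mat \<Rightarrow> ('a mat \<Rightarrow> 'a)" where
  "act \<beta> P g y h = funrest (utR (sum_list \<beta>) (fat \<beta> P))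
      (\<lambda>x. y (mmult (sum_list \<beta>) (mmult (sum_list \<beta>) (minv (sum_list \<beta>) g) x) (minv (sum_list \<beta>) h)))"

definition orbit :: "nat list \<Rightarrow> (nat \<times> nat) set \<Rightarrow> (('a::field) mat \<Rightarrow> 'a) \<Rightarrow> ('a mat \<Rightarrow> 'a) set" where
  "orbit \<beta> P y = {act \<beta> P g y h | g h. g \<in> Pbeta \<beta> \<and> h \<in> Pbeta \<beta>}"

definition schar :: "('a::field \<Rightarrow> complex) \<Rightarrow> nat list \<Rightarrow> (nat \<times> nat) set \<Rightarrow> ('a mat \<Rightarrow> 'a) \<Rightarrow> 'a mat \<Rightarrow> complex" where
  "schar \<theta> \<beta> P y u = (\<Sum>z \<in> orbit \<beta> P y. \<theta> (z (msub u (idm (sum_list \<beta>)))))"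

definition rook :: "(nat \<times> nat) set \<Rightarrow> (nat \<Rightarrow> nat \<Rightarrow> nat) \<Rightarrow> bool" where
  "rook R lt \<longleftrightarrow> (\<forall>a b. lt a b \<le> 1) \<and> (\<forall>a b. lt a b \<noteq> 0 \<longrightarrow> (a, b) \<in> R) \<and>
     (\<forall>a b b'. lt a b = 1 \<and> lt a b' = 1 \<longrightarrow> b = b') \<and>
     (\<forall>a a' b. lt a b = 1 \<and> lt a' b = 1 \<longrightarrow> a = a')"

definition estar :: "nat \<Rightarrow> (nat \<times> nat) set \<Rightarrow> (nat \<Rightarrow> nat \<Rightarrow> nat) \<Rightarrow> ('a::field) mat \<Rightarrow> 'a" where
  "estar n R lt = funrest (utR n R) (\<lambda>x. \<Sum>(a, b) \<in> R. of_nat (lt a b) * x a b)"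

definition blockcount :: "nat list \<Rightarrow> (nat \<Rightarrow> nat \<Rightarrow> nat) \<Rightarrow> nat \<Rightarrow> nat \<Rightarrow> nat" where
  "blockcount \<beta> lt i j = (\<Sum>a \<in> blockQ \<beta> i. \<Sum>b \<in> blockQ \<beta> j. lt a b)"

definition Tset :: "nat list \<Rightarrow> (nat \<times> nat) set \<Rightarrow> (nat \<Rightarrow> nat \<Rightarrow> nat) set" where
  "Tset \<beta> P = {lam. (\<forall>i j. lam i j \<noteq> 0 \<longrightarrow> (i, j) \<in> P) \<and>
      (\<forall>j \<in> {1..length \<beta>}. (\<Sum>k \<in> {k. (j, k) \<in> P}. lam j k) \<le> \<beta> ! (j - 1) \<and>
                            (\<Sum>i \<in> {i. (i, j) \<in> P}. lam i j) \<le> \<beta> ! (j - 1))}"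

definition chi :: "('a::field \<Rightarrow> complex) \<Rightarrow> nat list \<Rightarrow> (nat \<times> nat) set \<Rightarrow> (nat \<Rightarrow> nat \<Rightarrow> nat) \<Rightarrow> 'a mat \<Rightarrow> complex" where
  "chi \<theta> \<beta> P lam = schar \<theta> \<beta> P
     (estar (sum_list \<beta>) (fat \<beta> P)
        (SOME lt. rook (fat \<beta> P) lt \<and> (\<forall>(i, j) \<in> P. blockcount \<beta> lt i j = lam i j)))"

definition Ext :: "(nat \<times> nat) set \<Rightarrow> (nat \<Rightarrow> nat \<Rightarrow> nat) \<Rightarrow> nat \<Rightarrow> nat \<Rightarrow> nat" where
  "Ext P lam = (\<lambda>i j. if (i, j) \<in> P then lam i j else 0)"

end

theory Submission
  imports Defs "HOL-Library.FuncSet"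
begin

text \<open>For a functional \<open>y\<close> on \<open>ut_(\<beta>,R)\<close>, the orbit-stabiliser theorem for the two-sided
  action of \<open>P_\<beta>\<close> gives \<open>|Stab y| \<chi>^y(1 + w) = \<Sum>_{(g,h) \<in> P_\<beta> \<times> P_\<beta>} \<vartheta>(y(g\<inverse> w h\<inverse>))\<close>, so
  \<open>\<chi>^y(1 + w) / \<chi>^y(1)\<close> is a quotient of two such sums in which \<open>|Stab y|\<close> cancels.
  A rook placement on \<open>fat_\<beta>(\<P>)\<close> with block count \<lambda> is also one on \<open>fat_\<beta>(\<L>)\<close> with block
  count \<open>Ext(\<lambda>)\<close>, so both characters come from the same placement. Normality of \<P> makes
  \<open>ut_(\<beta>,\<P>)\<close> stable under multiplication by \<open>P_\<beta>\<close> on either side, so for \<open>w \<in> ut_(\<beta>,\<P>)\<close>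
  every \<open>g\<inverse> w h\<inverse>\<close> stays in \<open>ut_(\<beta>,\<P>)\<close>, where the two functionals \<open>e\<^sup>*_\<lambda>\<close> agree:
  the two sums coincide term by term.\<close>

lemma sum_comp_constant_fibres:
  assumes "finite A" "\<And>p. p \<in> A \<Longrightarrow> card {q \<in> A. F q = F p} = k"
  shows "(\<Sum>p\<in>A. f (F p)) = of_nat k * (\<Sum>z\<in>F ` A. f z :: 'b::comm_semiring_1)"
proof -
  have "(\<Sum>p\<in>A. f (F p)) = (\<Sum>z\<in>F ` A. \<Sum>p\<in>{q \<in> A. F q = z}. f (F p))"
    using assms(1) by (rule sum.image_gen)
  also have "\<dots> = (\<Sum>z\<in>F ` A. of_nat k * f z)"
    by (rule sum.cong) (use assms(2) in auto)
  finally show ?thesis by (simp add: sum_distrib_left)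
qed

lemma mmult_assoc: "mmult n (mmult n x y) z = mmult n x (mmult n y (z::'a::comm_semiring_1 mat))"
  unfolding mmult_def
  by (intro ext) (simp add: sum_distrib_left sum_distrib_right mult.assoc, rule sum.swap)

lemma mmult_idm_left: "x \<in> matsN n \<Longrightarrow> mmult n (idm n) x = (x::'a::comm_semiring_1 mat)"
  unfolding mmult_def idm_def
proof (intro ext)
  fix a b assume x: "x \<in> matsN n"
  show "(\<Sum>c\<in>{1..n}. (if a = c \<and> a \<in> {1..n} then 1 else 0) * x c b) = x a b"
  proof (cases "a \<in> {1..n}")
    case True
    then show ?thesis by (simp add: if_distrib[of "\<lambda>t. t * _"] cong: if_cong)
  qed (use x in \<open>auto simp: matsN_def\<close>)
qed

lemma mmult_idm_right: "x \<in> matsN n \<Longrightarrow> mmult n x (idm n) = (x::'a::comm_semiring_1 mat)"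
  unfolding mmult_def idm_def
proof (intro ext)
  fix a b assume x: "x \<in> matsN n"
  show "(\<Sum>c\<in>{1..n}. x a c * (if c = b \<and> c \<in> {1..n} then 1 else 0)) = x a b"
  proof (cases "b \<in> {1..n}")
    case True
    then show ?thesis by (simp add: if_distrib[of "\<lambda>t. _ * t"] cong: if_cong)
  qed (use x in \<open>auto simp: matsN_def\<close>)
qed

lemma mmult_matsN: "x \<in> matsN n \<Longrightarrow> y \<in> matsN n \<Longrightarrow> mmult n x y \<in> matsN n"
  unfolding mmult_def matsN_def by auto

lemma idm_matsN: "idm n \<in> matsN n"
  unfolding idm_def matsN_def by auto

lemma minv_unique:
  assumes "h \<in> matsN n" "mmult n g h = idm n" "mmult n h g = (idm n :: 'a::comm_semiring_1 mat)"
  shows "minv n g = h"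
  unfolding minv_def
proof (rule the_equality)
  fix h' assume h': "h' \<in> matsN n \<and> mmult n g h' = idm n \<and> mmult n h' g = idm n"
  have "h' = mmult n h' (mmult n g h)" using h' assms by (simp add: mmult_idm_right)
  also have "\<dots> = mmult n (mmult n h' g) h" by (simp add: mmult_assoc)
  also have "\<dots> = h" using h' assms by (simp add: mmult_idm_left)
  finally show "h' = h" .
qed (use assms in auto)

lemma minv_idm: "minv n (idm n) = (idm n :: 'a::comm_semiring_1 mat)"
  by (intro minv_unique idm_matsN mmult_idm_left)

lemma finite_matsN: "finite (matsN n :: ('a::{finite,zero}) mat set)"
proof -
  let ?I = "{1..n} \<times> {1..n}"
  let ?f = "\<lambda>x::'a mat. restrict (case_prod x) ?I"
  have "inj_on ?f (matsN n)"
  proof (rule inj_onI)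
    fix x y :: "'a mat" assume xy: "x \<in> matsN n" "y \<in> matsN n" "?f x = ?f y"
    show "x = y"
    proof (intro ext)
      fix a b
      show "x a b = y a b"
      proof (cases "(a, b) \<in> ?I")
        case True
        then show ?thesis using fun_cong[OF xy(3), of "(a, b)"] by (simp only: restrict_apply' case_prod_conv)
      next
        case False
        then have "x a b = 0" "y a b = 0" using xy(1,2) unfolding matsN_def by auto
        then show ?thesis by simp
      qed
    qed
  qed
  moreover have "?f ` matsN n \<subseteq> PiE ?I (\<lambda>_. UNIV)"
    by (intro image_subsetI) (simp add: restrict_PiE_iff)
  moreover have "finite (PiE ?I (\<lambda>_. UNIV :: 'a set))"
    by (rule finite_PiE) auto
  ultimately show ?thesis using inj_on_finite by blast
qed

lemma sum_list_take_mono: "i \<le> j \<Longrightarrow> sum_list (take i (xs::nat list)) \<le> sum_list (take j xs)"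
  by (metis le_add1 le_add_diff_inverse sum_list_append take_add)

lemma blockQ_bounds:
  assumes "a \<in> blockQ \<beta> i"
  shows "1 \<le> i" "i \<le> length \<beta>" "1 \<le> a" "a \<le> sum_list \<beta>"
proof -
  have a: "sum_list (take (i - 1) \<beta>) + 1 \<le> a" "a \<le> sum_list (take i \<beta>)"
    using assms unfolding blockQ_def by auto
  show "1 \<le> a" using a by simp
  show "1 \<le> i" using a by (cases i) auto
  show "i \<le> length \<beta>"
  proof (rule ccontr)
    assume "\<not> i \<le> length \<beta>"
    then have "take (i - 1) \<beta> = \<beta>" "take i \<beta> = \<beta>" by auto
    then show False using a by auto
  qed
  show "a \<le> sum_list \<beta>"
    using a sum_list_take_mono[of i "length \<beta>" \<beta>] by (cases "i \<le> length \<beta>") auto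
qed

lemma blockQ_unique:
  assumes "a \<in> blockQ \<beta> i" "a \<in> blockQ \<beta> j"
  shows "i = j"
proof -
  have False if "a \<in> blockQ \<beta> p" "a \<in> blockQ \<beta> q" "p < q" for p q
  proof -
    have "a \<le> sum_list (take p \<beta>)" "sum_list (take (q - 1) \<beta>) + 1 \<le> a"
      using that unfolding blockQ_def by auto
    moreover have "sum_list (take p \<beta>) \<le> sum_list (take (q - 1) \<beta>)"
      using \<open>p < q\<close> by (intro sum_list_take_mono) auto
    ultimately show False by auto
  qed
  then show ?thesis using assms by (metis linorder_neqE_nat)
qed

lemma blockQ_exists:
  assumes "1 \<le> a" "a \<le> sum_list \<beta>"
  shows "\<exists>i. a \<in> blockQ \<beta> i"
proof -
  define i where "i = (LEAST i. a \<le> sum_list (take i \<beta>))"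
  have "a \<le> sum_list (take (length \<beta>) \<beta>)" using assms by simp
  then have i: "a \<le> sum_list (take i \<beta>)" unfolding i_def by (rule LeastI)
  have "i \<noteq> 0" using i assms by (cases i) auto
  then have "\<not> a \<le> sum_list (take (i - 1) \<beta>)"
    unfolding i_def by (metis diff_less less_one not_less_Least not_gr_zero i_def)
  then have "a \<in> blockQ \<beta> i" using i unfolding blockQ_def by auto
  then show ?thesis ..
qed

lemma finite_blockQ: "finite (blockQ \<beta> i)"
  unfolding blockQ_def by simp

lemma fat_subset: "fat \<beta> R \<subseteq> {1..sum_list \<beta>} \<times> {1..sum_list \<beta>}"
proof
  fix p assume "p \<in> fat \<beta> R"
  then obtain i j where "fst p \<in> blockQ \<beta> i" "snd p \<in> blockQ \<beta> j"
    unfolding fat_def by auto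
  then show "p \<in> {1..sum_list \<beta>} \<times> {1..sum_list \<beta>}"
    using blockQ_bounds(3,4) by (simp add: mem_Times_iff)
qed

lemma finite_fat: "finite (fat \<beta> R)"
  using fat_subset by (rule finite_subset) simp

lemma fat_mono: "P \<subseteq> R \<Longrightarrow> fat \<beta> P \<subseteq> fat \<beta> R"
  unfolding fat_def by blast

lemma fat_blockQ:
  assumes "(a, b) \<in> fat \<beta> R" "a \<in> blockQ \<beta> i" "b \<in> blockQ \<beta> j"
  shows "(i, j) \<in> R"
  using assms blockQ_unique unfolding fat_def by blast

lemma utR_mono: "R \<subseteq> S \<Longrightarrow> utR n R \<subseteq> utR n S"
  unfolding utR_def by blast

section \<open>The parabolic group\<close>

definition block_triangular :: "nat list \<Rightarrow> ('a::zero) mat set" where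
  "block_triangular \<beta> = {g \<in> matsN (sum_list \<beta>).
      \<forall>a b. g a b \<noteq> 0 \<longrightarrow> (\<exists>i j. i \<le> j \<and> a \<in> blockQ \<beta> i \<and> b \<in> blockQ \<beta> j)}"

lemma Pbeta_iff_block_triangular:
  "g \<in> Pbeta \<beta> \<longleftrightarrow> g \<in> block_triangular \<beta> \<and> (\<exists>h \<in> matsN (sum_list \<beta>).
      mmult (sum_list \<beta>) g h = idm (sum_list \<beta>) \<and> mmult (sum_list \<beta>) h g = idm (sum_list \<beta>))"
  unfolding Pbeta_def block_triangular_def by auto

lemma block_triangular_mmult:
  assumes "x \<in> block_triangular \<beta>" "y \<in> block_triangular \<beta>"
  shows "mmult (sum_list \<beta>) x y \<in> block_triangular \<beta>"
  unfolding block_triangular_def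
proof (intro CollectI conjI allI impI)
  show "mmult (sum_list \<beta>) x y \<in> matsN (sum_list \<beta>)"
    using assms by (intro mmult_matsN) (auto simp: block_triangular_def)
  fix a b assume "mmult (sum_list \<beta>) x y a b \<noteq> 0"
  then obtain c where "c \<in> {1..sum_list \<beta>}" "x a c * y c b \<noteq> 0"
    unfolding mmult_def by (rule sum.not_neutral_contains_not_neutral)
  then have "x a c \<noteq> 0" "y c b \<noteq> 0" by auto
  then obtain i j j' k where "i \<le> j" "a \<in> blockQ \<beta> i" "c \<in> blockQ \<beta> j"
      "j' \<le> k" "c \<in> blockQ \<beta> j'" "b \<in> blockQ \<beta> k"
    using assms unfolding block_triangular_def by blast
  moreover have "j = j'" using blockQ_unique calculation by blast
  ultimately show "\<exists>i j. i \<le> j \<and> a \<in> blockQ \<beta> i \<and> b \<in> blockQ \<beta> j"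
    using le_trans by blast
qed

lemma idm_block_triangular: "idm (sum_list \<beta>) \<in> block_triangular \<beta>"
  unfolding block_triangular_def
proof (intro CollectI conjI allI impI idm_matsN)
  fix a b assume "idm (sum_list \<beta>) a b \<noteq> (0::'a)"
  then have ab: "a = b" "1 \<le> a" "a \<le> sum_list \<beta>" by (auto simp: idm_def split: if_splits)
  then show "\<exists>i j. i \<le> j \<and> a \<in> blockQ \<beta> i \<and> b \<in> blockQ \<beta> j" using blockQ_exists by blast
qed

lemma finite_block_triangular: "finite (block_triangular \<beta> :: ('a::{finite,zero}) mat set)"
  using finite_matsN by (rule finite_subset[rotated]) (auto simp: block_triangular_def)

text \<open>Over a finite field, left multiplication by an invertible block triangular matrix
  permutes the block triangular matrices, so the inverse is block triangular.\<close>

lemma Pbeta_minv: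
  fixes g :: "('a::{finite,field}) mat"
  assumes "g \<in> Pbeta \<beta>"
  shows "minv (sum_list \<beta>) g \<in> Pbeta \<beta>"
    and "mmult (sum_list \<beta>) g (minv (sum_list \<beta>) g) = idm (sum_list \<beta>)"
    and "mmult (sum_list \<beta>) (minv (sum_list \<beta>) g) g = idm (sum_list \<beta>)"
proof -
  let ?n = "sum_list \<beta>"
  obtain h where h: "h \<in> matsN ?n" "mmult ?n g h = idm ?n" "mmult ?n h g = idm ?n"
    and g: "g \<in> block_triangular \<beta>"
    using assms unfolding Pbeta_iff_block_triangular by blast
  have gM: "g \<in> matsN ?n" using g by (simp add: block_triangular_def)
  have mi: "minv ?n g = h" using minv_unique h by blast
  have cancel: "mmult ?n h (mmult ?n g x) = x" if "x \<in> matsN ?n" for x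
    using that by (simp flip: mmult_assoc add: h mmult_idm_left)
  have "(\<lambda>m. mmult ?n g m) ` block_triangular \<beta> = block_triangular \<beta>"
  proof (rule endo_inj_surj[OF finite_block_triangular])
    show "(\<lambda>m. mmult ?n g m) ` block_triangular \<beta> \<subseteq> block_triangular \<beta>"
      using block_triangular_mmult g by blast
    show "inj_on (\<lambda>m. mmult ?n g m) (block_triangular \<beta>)"
      by (rule inj_on_inverseI[of _ "mmult ?n h"]) (simp add: cancel block_triangular_def)
  qed
  then obtain m where m: "m \<in> block_triangular \<beta>" "mmult ?n g m = idm ?n"
    using idm_block_triangular by (metis imageE)
  then have "h = m" using cancel[of m] h(1) by (simp add: block_triangular_def mmult_idm_right)
  then show "minv ?n g \<in> Pbeta \<beta>"
    unfolding mi Pbeta_iff_block_triangular using gM h m by blast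
  show "mmult ?n g (minv ?n g) = idm ?n" "mmult ?n (minv ?n g) g = idm ?n"
    using mi h by auto
qed

lemma Pbeta_matsN: "g \<in> Pbeta \<beta> \<Longrightarrow> g \<in> matsN (sum_list \<beta>)"
  unfolding Pbeta_def by blast

lemma Pbeta_block_triangular: "g \<in> Pbeta \<beta> \<Longrightarrow> g \<in> block_triangular \<beta>"
  unfolding Pbeta_iff_block_triangular by blast

lemma Pbeta_mmult:
  fixes g1 :: "('a::{finite,field}) mat"
  assumes "g1 \<in> Pbeta \<beta>" "g2 \<in> Pbeta \<beta>"
  shows "mmult (sum_list \<beta>) g1 g2 \<in> Pbeta \<beta>"
    and "minv (sum_list \<beta>) (mmult (sum_list \<beta>) g1 g2) =
         mmult (sum_list \<beta>) (minv (sum_list \<beta>) g2) (minv (sum_list \<beta>) g1)"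
proof -
  let ?n = "sum_list \<beta>"
  note i1 = Pbeta_minv[OF assms(1)] and i2 = Pbeta_minv[OF assms(2)]
  have m1: "minv ?n g1 \<in> matsN ?n" and m2: "g2 \<in> matsN ?n" and m3: "minv ?n g2 \<in> matsN ?n"
    using i1(1) i2(1) assms(2) by (auto dest: Pbeta_matsN)
  have right: "mmult ?n (mmult ?n g1 g2) (mmult ?n (minv ?n g2) (minv ?n g1)) = idm ?n"
  proof -
    have "mmult ?n (mmult ?n g1 g2) (mmult ?n (minv ?n g2) (minv ?n g1))
        = mmult ?n g1 (mmult ?n (mmult ?n g2 (minv ?n g2)) (minv ?n g1))"
      by (simp only: mmult_assoc)
    also have "\<dots> = idm ?n" using i1 i2 m1 by (simp add: mmult_idm_left)
    finally show ?thesis .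
  qed
  have left: "mmult ?n (mmult ?n (minv ?n g2) (minv ?n g1)) (mmult ?n g1 g2) = idm ?n"
  proof -
    have "mmult ?n (mmult ?n (minv ?n g2) (minv ?n g1)) (mmult ?n g1 g2)
        = mmult ?n (minv ?n g2) (mmult ?n (mmult ?n (minv ?n g1) g1) g2)"
      by (simp only: mmult_assoc)
    also have "\<dots> = idm ?n" using i1 i2 m2 by (simp add: mmult_idm_left)
    finally show ?thesis .
  qed
  have "mmult ?n g1 g2 \<in> block_triangular \<beta>"
    using assms block_triangular_mmult unfolding Pbeta_iff_block_triangular by blast
  then show "mmult ?n g1 g2 \<in> Pbeta \<beta>"
    unfolding Pbeta_iff_block_triangular using left right mmult_matsN[OF m3 m1] by blast
  show "minv ?n (mmult ?n g1 g2) = mmult ?n (minv ?n g2) (minv ?n g1)"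
    using left right mmult_matsN[OF m3 m1] by (intro minv_unique)
qed

lemma Pbeta_mmult_cancel:
  fixes g :: "('a::{finite,field}) mat"
  assumes "g \<in> Pbeta \<beta>" "x \<in> matsN (sum_list \<beta>)"
  shows "mmult (sum_list \<beta>) (minv (sum_list \<beta>) g) (mmult (sum_list \<beta>) g x) = x"
    and "mmult (sum_list \<beta>) g (mmult (sum_list \<beta>) (minv (sum_list \<beta>) g) x) = x"
    and "mmult (sum_list \<beta>) (mmult (sum_list \<beta>) x g) (minv (sum_list \<beta>) g) = x"
    and "mmult (sum_list \<beta>) (mmult (sum_list \<beta>) x (minv (sum_list \<beta>) g)) g = x"
  using assms Pbeta_minv[OF assms(1)]
  by (simp_all flip: mmult_assoc add: mmult_idm_left) (simp_all add: mmult_assoc mmult_idm_right)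

lemma idm_Pbeta: "idm (sum_list \<beta>) \<in> (Pbeta \<beta> :: ('a::field) mat set)"
  unfolding Pbeta_iff_block_triangular
  using idm_block_triangular idm_matsN mmult_idm_left by blast

lemma finite_Pbeta: "finite (Pbeta \<beta> :: ('a::{finite,field}) mat set)"
  using finite_block_triangular
  by (rule finite_subset[rotated]) (auto simp: Pbeta_iff_block_triangular)

lemma normal_sub_Lord: "normal_sub (Lord m) (Lord m)"
  unfolding normal_sub_def Lord_def by auto

lemma normal_sub_extend_left: "normal_sub L P \<Longrightarrow> (j, k) \<in> P \<Longrightarrow> (i, j) \<in> L \<Longrightarrow> (i, k) \<in> P"
  unfolding normal_sub_def by blast

lemma normal_sub_extend_right: "normal_sub L P \<Longrightarrow> (j, k) \<in> P \<Longrightarrow> (k, l) \<in> L \<Longrightarrow> (j, l) \<in> P"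
  unfolding normal_sub_def by blast

lemma utR_fat_mmult_stable:
  assumes normal: "normal_sub (Lord (length \<beta>)) R"
    and A: "A \<in> block_triangular \<beta>" and C: "C \<in> block_triangular \<beta>"
    and x: "x \<in> utR (sum_list \<beta>) (fat \<beta> R)"
  shows "mmult (sum_list \<beta>) (mmult (sum_list \<beta>) A x) C \<in> utR (sum_list \<beta>) (fat \<beta> R)"
  unfolding utR_def
proof (intro CollectI conjI allI impI)
  let ?n = "sum_list \<beta>" and ?L = "Lord (length \<beta>)"
  show "mmult ?n (mmult ?n A x) C \<in> matsN ?n"
    using A C x by (intro mmult_matsN) (auto simp: block_triangular_def utR_def)
  fix a b assume "mmult ?n (mmult ?n A x) C a b \<noteq> 0"
  then obtain d where "d \<in> {1..?n}" "(\<Sum>c\<in>{1..?n}. A a c * x c d) * C d b \<noteq> 0"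
    unfolding mmult_def by (rule sum.not_neutral_contains_not_neutral)
  then have Ax: "(\<Sum>c\<in>{1..?n}. A a c * x c d) \<noteq> 0" and Cdb: "C d b \<noteq> 0" by auto
  from Ax obtain c where "c \<in> {1..?n}" "A a c * x c d \<noteq> 0"
    by (rule sum.not_neutral_contains_not_neutral)
  with Cdb have nz: "A a c \<noteq> 0" "x c d \<noteq> 0" "C d b \<noteq> 0" by auto
  obtain i i' where i: "i \<le> i'" "a \<in> blockQ \<beta> i" "c \<in> blockQ \<beta> i'"
    using A nz unfolding block_triangular_def by blast
  obtain j j' where j: "j' \<le> j" "d \<in> blockQ \<beta> j'" "b \<in> blockQ \<beta> j"
    using C nz unfolding block_triangular_def by blast
  have "(c, d) \<in> fat \<beta> R" using x nz unfolding utR_def by blast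
  then have R: "(i', j') \<in> R" using fat_blockQ i j by blast
  have "(i', j') \<in> ?L" using normal R unfolding normal_sub_def by blast
  then have "i' < j'" "j' \<le> length \<beta>" "1 \<le> i'" unfolding Lord_def by auto
  moreover have "1 \<le> i" "j \<le> length \<beta>" using blockQ_bounds i j by blast+
  ultimately have left: "i < i' \<Longrightarrow> (i, i') \<in> ?L" and right: "j' < j \<Longrightarrow> (j', j) \<in> ?L"
    unfolding Lord_def by auto
  have "(i, j') \<in> R"
    using R i(1) left normal_sub_extend_left[OF normal] by (cases "i < i'") auto
  then have "(i, j) \<in> R"
    using j(1) right normal_sub_extend_right[OF normal] by (cases "j' < j") auto
  then show "(a, b) \<in> fat \<beta> R" unfolding fat_def using i j by blast
qed

lemma act_mmult:
  fixes g1 :: "('a::{finite,field}) mat"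
  assumes normal: "normal_sub (Lord (length \<beta>)) R"
    and g: "g1 \<in> Pbeta \<beta>" "g2 \<in> Pbeta \<beta>" "h1 \<in> Pbeta \<beta>" "h2 \<in> Pbeta \<beta>"
  shows "act \<beta> R (mmult (sum_list \<beta>) g1 g2) y (mmult (sum_list \<beta>) h2 h1) =
         act \<beta> R g1 (act \<beta> R g2 y h2) h1"
proof (rule ext)
  fix x
  let ?n = "sum_list \<beta>" and ?U = "utR (sum_list \<beta>) (fat \<beta> R)"
  show "act \<beta> R (mmult ?n g1 g2) y (mmult ?n h2 h1) x = act \<beta> R g1 (act \<beta> R g2 y h2) h1 x"
  proof (cases "x \<in> ?U")
    case True
    have "mmult ?n (mmult ?n (minv ?n g1) x) (minv ?n h1) \<in> ?U"
      using g by (intro utR_fat_mmult_stable[OF normal _ _ True] Pbeta_block_triangular Pbeta_minv(1))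
    moreover have "mmult ?n (mmult ?n (minv ?n (mmult ?n g1 g2)) x) (minv ?n (mmult ?n h2 h1)) =
        mmult ?n (mmult ?n (minv ?n g2) (mmult ?n (mmult ?n (minv ?n g1) x) (minv ?n h1))) (minv ?n h2)"
      using g by (simp only: Pbeta_mmult mmult_assoc)
    ultimately show ?thesis using True unfolding act_def funrest_def by simp
  qed (simp add: act_def funrest_def)
qed

lemma act_idm:
  assumes "\<forall>x. x \<notin> utR (sum_list \<beta>) (fat \<beta> R) \<longrightarrow> y x = 0"
  shows "act \<beta> R (idm (sum_list \<beta>)) y (idm (sum_list \<beta>)) = (y :: ('a::field) mat \<Rightarrow> 'a)"
  using assms unfolding act_def funrest_def
  by (auto simp: minv_idm mmult_idm_left mmult_idm_right utR_def)

section \<open>Orbit-stabiliser averages\<close>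

definition stabiliser :: "nat list \<Rightarrow> (nat \<times> nat) set \<Rightarrow> (('a::field) mat \<Rightarrow> 'a) \<Rightarrow> ('a mat \<times> 'a mat) set" where
  "stabiliser \<beta> R y = {p \<in> Pbeta \<beta> \<times> Pbeta \<beta>. act \<beta> R (fst p) y (snd p) = y}"

definition Pbeta_sum :: "('a::field \<Rightarrow> complex) \<Rightarrow> nat list \<Rightarrow> (nat \<times> nat) set \<Rightarrow> ('a mat \<Rightarrow> 'a) \<Rightarrow> 'a mat \<Rightarrow> complex" where
  "Pbeta_sum \<theta> \<beta> R y w = (\<Sum>p \<in> Pbeta \<beta> \<times> Pbeta \<beta>. \<theta> (act \<beta> R (fst p) y (snd p) w))"

lemma card_act_fibre:
  fixes y :: "('a::{finite,field}) mat \<Rightarrow> 'a"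
  assumes normal: "normal_sub (Lord (length \<beta>)) R"
    and y: "\<forall>x. x \<notin> utR (sum_list \<beta>) (fat \<beta> R) \<longrightarrow> y x = 0"
    and g0: "g0 \<in> Pbeta \<beta>" and h0: "h0 \<in> Pbeta \<beta>"
  shows "card {p \<in> Pbeta \<beta> \<times> Pbeta \<beta>. act \<beta> R (fst p) y (snd p) = act \<beta> R g0 y h0} =
         card (stabiliser \<beta> R y)"
    (is "card ?fibre = _")
proof -
  let ?n = "sum_list \<beta>" and ?G = "Pbeta \<beta> :: 'a mat set"
  define \<phi> where "\<phi> = (\<lambda>(g, h). (mmult ?n g0 g, mmult ?n h h0))"
  define \<psi> where "\<psi> = (\<lambda>(g, h). (mmult ?n (minv ?n g0) g, mmult ?n h (minv ?n h0)))"
  note i0 = Pbeta_minv[OF g0] Pbeta_minv[OF h0]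
  have "bij_betw \<phi> (stabiliser \<beta> R y) ?fibre"
  proof (rule bij_betw_byWitness[where f' = \<psi>])
    show "\<forall>p \<in> stabiliser \<beta> R y. \<psi> (\<phi> p) = p" "\<forall>p \<in> ?fibre. \<phi> (\<psi> p) = p"
      unfolding \<phi>_def \<psi>_def stabiliser_def
      by (auto simp: Pbeta_mmult_cancel g0 h0 Pbeta_matsN)
    show "\<phi> ` stabiliser \<beta> R y \<subseteq> ?fibre"
      unfolding \<phi>_def stabiliser_def by (auto simp: act_mmult normal g0 h0 Pbeta_mmult)
    have "act \<beta> R (mmult ?n (minv ?n g0) g) y (mmult ?n h (minv ?n h0)) = y"
      if "g \<in> ?G" "h \<in> ?G" "act \<beta> R g y h = act \<beta> R g0 y h0" for g h
    proof -
      have "act \<beta> R (mmult ?n (minv ?n g0) g) y (mmult ?n h (minv ?n h0))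
          = act \<beta> R (minv ?n g0) (act \<beta> R g0 y h0) (minv ?n h0)"
        using that by (simp add: act_mmult normal i0)
      also have "\<dots> = act \<beta> R (mmult ?n (minv ?n g0) g0) y (mmult ?n h0 (minv ?n h0))"
        by (rule act_mmult[OF normal i0(1) g0 i0(4) h0, symmetric])
      also have "\<dots> = y" by (simp add: i0 act_idm y)
      finally show ?thesis .
    qed
    then show "\<psi> ` ?fibre \<subseteq> stabiliser \<beta> R y"
      unfolding \<psi>_def stabiliser_def by (auto simp: i0 Pbeta_mmult)
  qed
  then show ?thesis by (simp add: bij_betw_same_card)
qed

lemma orbit_eq_image: "orbit \<beta> R y = (\<lambda>p. act \<beta> R (fst p) y (snd p)) ` (Pbeta \<beta> \<times> Pbeta \<beta>)"
  unfolding orbit_def by force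

lemma card_stabiliser_pos:
  fixes y :: "('a::{finite,field}) mat \<Rightarrow> 'a"
  assumes "\<forall>x. x \<notin> utR (sum_list \<beta>) (fat \<beta> R) \<longrightarrow> y x = 0"
  shows "card (stabiliser \<beta> R y) > 0"
proof -
  have "(idm (sum_list \<beta>), idm (sum_list \<beta>)) \<in> stabiliser \<beta> R y"
    unfolding stabiliser_def using idm_Pbeta act_idm[OF assms] by simp
  moreover have "finite (stabiliser \<beta> R y)"
    using finite_SigmaI[OF finite_Pbeta finite_Pbeta]
    by (rule finite_subset[rotated]) (auto simp: stabiliser_def)
  ultimately show ?thesis by (auto simp: card_gt_0_iff)
qed

lemma card_stabiliser_mult_schar:
  fixes y :: "('a::{finite,field}) mat \<Rightarrow> 'a"
  assumes normal: "normal_sub (Lord (length \<beta>)) R"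
    and y: "\<forall>x. x \<notin> utR (sum_list \<beta>) (fat \<beta> R) \<longrightarrow> y x = 0"
  shows "of_nat (card (stabiliser \<beta> R y)) * schar \<theta> \<beta> R y u =
         Pbeta_sum \<theta> \<beta> R y (msub u (idm (sum_list \<beta>)))"
proof -
  let ?F = "\<lambda>p. act \<beta> R (fst p) y (snd p)"
  have "card {q \<in> Pbeta \<beta> \<times> Pbeta \<beta>. ?F q = ?F p} = card (stabiliser \<beta> R y)"
    if "p \<in> Pbeta \<beta> \<times> Pbeta \<beta>" for p
    using that card_act_fibre[OF normal y] by (cases p) simp
  then show ?thesis
    unfolding Pbeta_sum_def schar_def orbit_eq_image
    by (intro sum_comp_constant_fibres[symmetric] finite_SigmaI finite_Pbeta)
qed

lemma schar_ratio_eq_Pbeta_sum_ratio: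
  fixes y :: "('a::{finite,field}) mat \<Rightarrow> 'a"
  assumes "normal_sub (Lord (length \<beta>)) R"
    and "\<forall>x. x \<notin> utR (sum_list \<beta>) (fat \<beta> R) \<longrightarrow> y x = 0"
  shows "schar \<theta> \<beta> R y u / schar \<theta> \<beta> R y v =
         Pbeta_sum \<theta> \<beta> R y (msub u (idm (sum_list \<beta>))) / Pbeta_sum \<theta> \<beta> R y (msub v (idm (sum_list \<beta>)))"
proof -
  define k :: complex where "k = of_nat (card (stabiliser \<beta> R y))"
  have "k \<noteq> 0" unfolding k_def using card_stabiliser_pos[OF assms(2)] by simp
  then show ?thesis
    using card_stabiliser_mult_schar[OF assms, of \<theta>, folded k_def]
    by (metis mult_divide_mult_cancel_left_if)
qed

section \<open>Extension from a normal subposet\<close>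

lemma rook_blockcount_Ext_iff:
  assumes "P \<subseteq> Lord (length \<beta>)"
  shows "rook (fat \<beta> P) lt \<and> (\<forall>(i, j) \<in> P. blockcount \<beta> lt i j = lam i j) \<longleftrightarrow>
         rook (fat \<beta> (Lord (length \<beta>))) lt \<and>
         (\<forall>(i, j) \<in> Lord (length \<beta>). blockcount \<beta> lt i j = Ext P lam i j)"
    (is "?rP \<and> ?cP \<longleftrightarrow> ?rL \<and> ?cL")
proof -
  let ?L = "Lord (length \<beta>)"
  have fat_sub: "fat \<beta> P \<subseteq> fat \<beta> ?L" using fat_mono assms by blast
  have blockcount_0: "blockcount \<beta> lt i j = 0 \<longleftrightarrow> (\<forall>a \<in> blockQ \<beta> i. \<forall>b \<in> blockQ \<beta> j. lt a b = 0)"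
    for i j unfolding blockcount_def by (simp add: finite_blockQ)
  have supp_P: "(\<forall>a b. lt a b \<noteq> 0 \<longrightarrow> (a, b) \<in> fat \<beta> P) \<longleftrightarrow>
      (\<forall>a b. lt a b \<noteq> 0 \<longrightarrow> (a, b) \<in> fat \<beta> ?L) \<and> (\<forall>i j. (i, j) \<in> ?L - P \<longrightarrow> blockcount \<beta> lt i j = 0)"
  proof (intro iffI conjI)
    assume "\<forall>a b. lt a b \<noteq> 0 \<longrightarrow> (a, b) \<in> fat \<beta> P"
    then show "\<forall>a b. lt a b \<noteq> 0 \<longrightarrow> (a, b) \<in> fat \<beta> ?L"
      and "\<forall>i j. (i, j) \<in> ?L - P \<longrightarrow> blockcount \<beta> lt i j = 0"
      using fat_sub fat_blockQ unfolding blockcount_0 by blast+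
  next
    assume supp_L: "(\<forall>a b. lt a b \<noteq> 0 \<longrightarrow> (a, b) \<in> fat \<beta> ?L) \<and>
      (\<forall>i j. (i, j) \<in> ?L - P \<longrightarrow> blockcount \<beta> lt i j = 0)"
    show "\<forall>a b. lt a b \<noteq> 0 \<longrightarrow> (a, b) \<in> fat \<beta> P"
    proof (intro allI impI)
      fix a b assume ab: "lt a b \<noteq> 0"
      then obtain i j where ij: "(i, j) \<in> ?L" "a \<in> blockQ \<beta> i" "b \<in> blockQ \<beta> j"
        using supp_L unfolding fat_def by blast
      have "(i, j) \<in> P"
      proof (rule ccontr)
        assume "(i, j) \<notin> P"
        with ij supp_L have "lt a b = 0" unfolding blockcount_0 by auto
        with ab show False ..
      qed
      with ij show "(a, b) \<in> fat \<beta> P" unfolding fat_def by blast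
    qed
  qed
  have "?rP \<longleftrightarrow> ?rL \<and> (\<forall>i j. (i, j) \<in> ?L - P \<longrightarrow> blockcount \<beta> lt i j = 0)"
    unfolding rook_def using supp_P by blast
  moreover have "?cL \<longleftrightarrow> ?cP \<and> (\<forall>i j. (i, j) \<in> ?L - P \<longrightarrow> blockcount \<beta> lt i j = 0)"
    using assms unfolding Ext_def by auto
  ultimately show ?thesis by blast
qed

lemma estar_fat_eq:
  assumes "fat \<beta> P \<subseteq> fat \<beta> L" "w \<in> utR (sum_list \<beta>) (fat \<beta> P)"
  shows "estar (sum_list \<beta>) (fat \<beta> L) lt w = (estar (sum_list \<beta>) (fat \<beta> P) lt w :: 'a::field)"
proof -
  have "w \<in> utR (sum_list \<beta>) (fat \<beta> L)" using assms utR_mono by blast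
  moreover have "(\<Sum>(a, b)\<in>fat \<beta> L. of_nat (lt a b) * w a b) = (\<Sum>(a, b)\<in>fat \<beta> P. of_nat (lt a b) * (w a b :: 'a))"
    by (rule sum.mono_neutral_right[OF finite_fat assms(1)]) (use assms(2) in \<open>auto simp: utR_def\<close>)
  ultimately show ?thesis using assms(2) unfolding estar_def funrest_def by simp
qed

lemma Pbeta_sum_estar_Lord:
  fixes w :: "('a::{finite,field}) mat"
  assumes normal: "normal_sub (Lord (length \<beta>)) P"
    and w: "w \<in> utR (sum_list \<beta>) (fat \<beta> P)"
  shows "Pbeta_sum \<theta> \<beta> P (estar (sum_list \<beta>) (fat \<beta> P) lt) w =
         Pbeta_sum \<theta> \<beta> (Lord (length \<beta>)) (estar (sum_list \<beta>) (fat \<beta> (Lord (length \<beta>))) lt) w"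
  unfolding Pbeta_sum_def
proof (rule sum.cong[OF refl])
  let ?n = "sum_list \<beta>" and ?L = "Lord (length \<beta>)"
  fix p :: "'a mat \<times> 'a mat" assume "p \<in> Pbeta \<beta> \<times> Pbeta \<beta>"
  then have "minv ?n (fst p) \<in> Pbeta \<beta>" "minv ?n (snd p) \<in> Pbeta \<beta>"
    using Pbeta_minv(1) by auto
  then have "minv ?n (fst p) \<in> block_triangular \<beta>" "minv ?n (snd p) \<in> block_triangular \<beta>"
    using Pbeta_block_triangular by blast+
  then have moved: "mmult ?n (mmult ?n (minv ?n (fst p)) w) (minv ?n (snd p)) \<in> utR ?n (fat \<beta> P)"
    using utR_fat_mmult_stable[OF normal _ _ w] by blast
  have fat_sub: "fat \<beta> P \<subseteq> fat \<beta> ?L"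
    using normal fat_mono unfolding normal_sub_def by blast
  then have "w \<in> utR ?n (fat \<beta> ?L)" using w utR_mono by blast
  then show "\<theta> (act \<beta> P (fst p) (estar ?n (fat \<beta> P) lt) (snd p) w) =
      \<theta> (act \<beta> ?L (fst p) (estar ?n (fat \<beta> ?L) lt) (snd p) w)"
    using w estar_fat_eq[OF fat_sub moved] unfolding act_def funrest_def by simp
qed

theorem mainTheorem7:
  fixes \<theta> :: "'a::{finite,field} \<Rightarrow> complex"
    and \<beta> :: "nat list" and P :: "(nat \<times> nat) set"
    and lam :: "nat \<Rightarrow> nat \<Rightarrow> nat" and u :: "'a mat"
  assumes hom: "\<forall>x y. \<theta> (x + y) = \<theta> x * \<theta> y"
    and units: "\<forall>x. \<theta> x \<noteq> 0"
    and nontriv: "\<exists>x. \<theta> x \<noteq> 1"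
    and comp: "\<forall>b \<in> set \<beta>. 0 < b"
    and poset: "subposet (length \<beta>) P"
    and normal: "normal_sub (Lord (length \<beta>)) P"
    and lam: "lam \<in> Tset \<beta> P"
    and u: "u \<in> UTR (sum_list \<beta>) (fat \<beta> P)"
  shows "chi \<theta> \<beta> P lam u / chi \<theta> \<beta> P lam (idm (sum_list \<beta>)) =
         chi \<theta> \<beta> (Lord (length \<beta>)) (Ext P lam) u /
         chi \<theta> \<beta> (Lord (length \<beta>)) (Ext P lam) (idm (sum_list \<beta>))"
proof -
  txt \<open>Only normality is used: both sides are built from the same chosen placement \<open>lt\<close>,
    so the identity holds for every \<vartheta> and \<lambda>, even when no rook placement with block count
    \<lambda> exists.\<close>
  let ?n = "sum_list \<beta>" and ?L = "Lord (length \<beta>)"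
  define lt where "lt = (SOME lt. rook (fat \<beta> P) lt \<and> (\<forall>(i, j) \<in> P. blockcount \<beta> lt i j = lam i j))"
  have "P \<subseteq> ?L" using normal unfolding normal_sub_def by blast
  then have chi_L: "chi \<theta> \<beta> ?L (Ext P lam) = schar \<theta> \<beta> ?L (estar ?n (fat \<beta> ?L) lt)"
    unfolding chi_def lt_def by (simp only: rook_blockcount_Ext_iff[symmetric])
  have chi_P: "chi \<theta> \<beta> P lam = schar \<theta> \<beta> P (estar ?n (fat \<beta> P) lt)"
    unfolding chi_def lt_def ..
  have supp: "\<forall>x. x \<notin> utR ?n (fat \<beta> R) \<longrightarrow> estar ?n (fat \<beta> R) lt x = (0::'a)" for R
    unfolding estar_def funrest_def by simp
  obtain x where "x \<in> utR ?n (fat \<beta> P)" "u = madd (idm ?n) x"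
    using u unfolding UTR_def by blast
  then have w_u: "msub u (idm ?n) \<in> utR ?n (fat \<beta> P)"
    by (simp add: madd_def msub_def)
  have w_1: "msub (idm ?n) (idm ?n :: 'a mat) \<in> utR ?n (fat \<beta> P)"
    by (simp add: msub_def utR_def matsN_def)
  show ?thesis
    unfolding chi_P chi_L schar_ratio_eq_Pbeta_sum_ratio[OF normal supp]
      schar_ratio_eq_Pbeta_sum_ratio[OF normal_sub_Lord supp]
    by (simp only: Pbeta_sum_estar_Lord[OF normal w_u] Pbeta_sum_estar_Lord[OF normal w_1])
qed

end
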